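(* Let $G$ be a connected finite graph, let $\mathcal{L}$ be a degree-list assignment for $G$, and let $g$ be a partial proper $\mathcal{L}$-coloring of $G$. Then for each vertex $u\in V(G)$, $G$ has a partial proper $\mathcal{L}$-coloring $f$ with $\mathrm{dom}(f)\supseteq V(G)\setminus\{u\}$ and $|f^{-1}(\alpha)|\geq|g^{-1}(\alpha)|$ for every color $\alpha$.
   Context: A list assignment for $G$ assigns to each vertex $x$ a set $\mathcal{L}(x)$; it is a degree-list assignment if $|\mathcal{L}(x)|\geq\deg_G(x)$ for all $x$. A partial $\mathcal{L}$-coloring is a function $g$ with $\mathrm{dom}(g)\subseteq V(G)$ and $g(x)\in\mathcal{L}(x)$ for $x\in\mathrm{dom}(g)$; it is proper if adjacent vertices in its domain get different colors. *)

theory Defs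
  imports Main
begin

definition fin_graph :: "'v set \<Rightarrow> ('v \<Rightarrow> 'v \<Rightarrow> bool) \<Rightarrow> bool" where
  "fin_graph V E \<longleftrightarrow> finite V \<and> (\<forall>x y. E x y \<longrightarrow> x \<in> V \<and> y \<in> V)
     \<and> (\<forall>x y. E x y \<longrightarrow> E y x) \<and> (\<forall>x. \<not> E x x)"

definition graph_connected :: "'v set \<Rightarrow> ('v \<Rightarrow> 'v \<Rightarrow> bool) \<Rightarrow> bool" where
  "graph_connected V E \<longleftrightarrow> V \<noteq> {} \<and> (\<forall>x\<in>V. \<forall>y\<in>V. E\<^sup>*\<^sup>* x y)"

definition degree :: "'v set \<Rightarrow> ('v \<Rightarrow> 'v \<Rightarrow> bool) \<Rightarrow> 'v \<Rightarrow> nat" where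
  "degree V E x = card {y \<in> V. E x y}"

text \<open>Degree-list assignment: |L(x)| \<ge> deg(x) for all x (an infinite list
  trivially satisfies this).\<close>
definition degree_list_assignment ::
  "'v set \<Rightarrow> ('v \<Rightarrow> 'v \<Rightarrow> bool) \<Rightarrow> ('v \<Rightarrow> 'c set) \<Rightarrow> bool" where
  "degree_list_assignment V E L \<longleftrightarrow>
     (\<forall>x\<in>V. infinite (L x) \<or> degree V E x \<le> card (L x))"

definition partial_L_coloring ::
  "'v set \<Rightarrow> ('v \<Rightarrow> 'c set) \<Rightarrow> ('v \<rightharpoonup> 'c) \<Rightarrow> bool" where
  "partial_L_coloring V L g \<longleftrightarrow> dom g \<subseteq> V \<and> (\<forall>x c. g x = Some c \<longrightarrow> c \<in> L x)"

definition proper_coloring ::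
  "('v \<Rightarrow> 'v \<Rightarrow> bool) \<Rightarrow> ('v \<rightharpoonup> 'c) \<Rightarrow> bool" where
  "proper_coloring E g \<longleftrightarrow>
     (\<forall>x y. x \<in> dom g \<and> y \<in> dom g \<and> E x y \<longrightarrow> g x \<noteq> g y)"

end

theory Submission
  imports Defs
begin

text \<open>Color the vertices other than \<open>u\<close> one at a time. An uncolored vertex \<open>y\<close> either sees
  a color of \<open>L(y)\<close> not used on its neighbors, or, since \<open>|L(y)| \<ge> deg(y)\<close>, its neighbors
  are all colored, with pairwise distinct colors exhausting \<open>L(y)\<close>. In the latter case the
  color of the next vertex \<open>z\<close> on a path from \<open>y\<close> to \<open>u\<close> can be moved to \<open>y\<close>: this keeps the
  coloring proper and every color class the same size, and leaves \<open>z\<close> uncolored instead.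
  Following the path, the hole either gets filled or ends at \<open>u\<close>.\<close>

definition proper_L_coloring ::
  "'v set \<Rightarrow> ('v \<Rightarrow> 'v \<Rightarrow> bool) \<Rightarrow> ('v \<Rightarrow> 'c set) \<Rightarrow> ('v \<rightharpoonup> 'c) \<Rightarrow> bool" where
  "proper_L_coloring V E L f \<longleftrightarrow> partial_L_coloring V L f \<and> proper_coloring E f"

definition color_classes_le :: "('v \<rightharpoonup> 'c) \<Rightarrow> ('v \<rightharpoonup> 'c) \<Rightarrow> bool" where
  "color_classes_le g f \<longleftrightarrow> (\<forall>\<alpha>. card {x. g x = Some \<alpha>} \<le> card {x. f x = Some \<alpha>})"

lemma color_classes_le_refl: "color_classes_le g g"
  by (simp add: color_classes_le_def)

lemma color_classes_le_trans:
  "color_classes_le g f \<Longrightarrow> color_classes_le f h \<Longrightarrow> color_classes_le g h"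
  unfolding color_classes_le_def using le_trans by blast

lemma color_classes_le_map_upd:
  assumes "finite (dom g)" "y \<notin> dom g"
  shows "color_classes_le g (g(y \<mapsto> c))"
  unfolding color_classes_le_def
proof
  fix \<alpha>
  have "finite {x. (g(y \<mapsto> c)) x = Some \<alpha>}"
    by (rule finite_subset[of _ "insert y (dom g)"]) (use assms(1) in auto)
  then show "card {x. g x = Some \<alpha>} \<le> card {x. (g(y \<mapsto> c)) x = Some \<alpha>}"
    by (rule card_mono) (use assms(2) in auto)
qed

lemma card_color_class_move:
  assumes "finite (dom g)" "y \<notin> dom g" "g z = Some \<alpha>"
  shows "card {x. ((g(z := None))(y \<mapsto> \<alpha>)) x = Some \<beta>} = card {x. g x = Some \<beta>}"
proof (cases "\<beta> = \<alpha>")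
  case True
  let ?S = "{x. g x = Some \<beta>}"
  have fin: "finite ?S" by (rule finite_subset[OF _ assms(1)]) auto
  have z: "z \<in> ?S" using assms(3) True by simp
  have "{x. ((g(z := None))(y \<mapsto> \<alpha>)) x = Some \<beta>} = insert y (?S - {z})"
    using True assms(2,3) by auto
  moreover have "y \<notin> ?S - {z}" using assms(2) by auto
  ultimately show ?thesis
    using fin z by (metis card_insert_disjoint finite_Diff card_Suc_Diff1)
next
  case False
  then have "{x. ((g(z := None))(y \<mapsto> \<alpha>)) x = Some \<beta>} = {x. g x = Some \<beta>}"
    using assms(2,3) by auto
  then show ?thesis by simp
qed

lemma color_classes_le_move:
  assumes "finite (dom g)" "y \<notin> dom g" "g z = Some \<alpha>"
  shows "color_classes_le ((g(z := None))(y \<mapsto> \<alpha>)) h \<longleftrightarrow> color_classes_le g h"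
  unfolding color_classes_le_def card_color_class_move[OF assms] ..

lemma finite_dom_if_partial_L_coloring:
  "partial_L_coloring V L f \<Longrightarrow> finite V \<Longrightarrow> finite (dom f)"
  unfolding partial_L_coloring_def using finite_subset by blast

lemma card_le_image_cover_imp_bij_betw:
  assumes "finite N" "card N \<le> card A" "A \<subseteq> h ` (N \<inter> D)"
  shows "N \<subseteq> D \<and> bij_betw h N A"
proof -
  have le1: "card A \<le> card (h ` (N \<inter> D))" by (rule card_mono) (use assms(1,3) in auto)
  have le2: "card (h ` (N \<inter> D)) \<le> card (N \<inter> D)" by (rule card_image_le) (use assms(1) in auto)
  have le3: "card (N \<inter> D) \<le> card N" by (rule card_mono) (use assms(1) in auto)
  have "N \<inter> D = N"
    by (rule card_subset_eq) (use assms(1,2) le1 le2 le3 in auto)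
  then have "card (h ` N) = card N" "card A = card (h ` N)" "A \<subseteq> h ` N"
    using assms(2,3) le1 le2 le3 by auto
  then have "inj_on h N" "A = h ` N"
    using assms(1) eq_card_imp_inj_on card_subset_eq finite_imageI by metis+
  then show ?thesis using \<open>N \<inter> D = N\<close> by (auto simp: bij_betw_def)
qed

lemma saturated_neighborhood_colors_distinct:
  assumes "fin_graph V E" "degree_list_assignment V E L" "y \<in> V"
    and saturated: "L y \<subseteq> {c. \<exists>w. E y w \<and> g w = Some c}" and "E y z"
  shows "\<exists>\<alpha>. g z = Some \<alpha> \<and> \<alpha> \<in> L y \<and> (\<forall>w. E y w \<and> g w = Some \<alpha> \<longrightarrow> w = z)"
proof -
  define N where "N = {w \<in> V. E y w}"
  have finN: "finite N" using assms(1) unfolding N_def fin_graph_def by auto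
  have cover: "L y \<subseteq> (the \<circ> g) ` (N \<inter> dom g)"
    using saturated assms(1) unfolding N_def fin_graph_def by force
  then have "finite (L y)" using finN finite_subset by blast
  then have "card N \<le> card (L y)"
    using assms(2,3) unfolding degree_list_assignment_def degree_def N_def by blast
  from card_le_image_cover_imp_bij_betw[OF finN this cover]
  have ND: "N \<subseteq> dom g" and inj: "inj_on (the \<circ> g) N" and img: "(the \<circ> g) ` N = L y"
    by (auto simp: bij_betw_def)
  have zN: "z \<in> N" using assms(1,5) unfolding N_def fin_graph_def by blast
  then obtain \<alpha> where \<alpha>: "g z = Some \<alpha>" using ND by blast
  have "\<alpha> \<in> L y" using img zN \<alpha> by force
  moreover have "w = z" if "E y w" "g w = Some \<alpha>" for w
    using inj_onD[OF inj, of w z] that zN \<alpha> assms(1) unfolding N_def fin_graph_def by auto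
  ultimately show ?thesis using \<alpha> by blast
qed

lemma proper_L_coloring_map_upd:
  assumes "fin_graph V E" "proper_L_coloring V E L g" "y \<in> V" "c \<in> L y"
    and free: "\<And>w. E y w \<Longrightarrow> g w \<noteq> Some c"
  shows "proper_L_coloring V E L (g(y \<mapsto> c))"
proof -
  have sym: "E a b \<Longrightarrow> E b a" and irrefl: "\<not> E a a" for a b
    using assms(1) unfolding fin_graph_def by auto
  have "(g(y \<mapsto> c)) a \<noteq> (g(y \<mapsto> c)) b"
    if "a \<in> dom (g(y \<mapsto> c))" "b \<in> dom (g(y \<mapsto> c))" "E a b" for a b
  proof (cases "a = y \<or> b = y")
    case True
    then show ?thesis using that(3) free sym irrefl by (metis fun_upd_apply)
  next
    case False
    then show ?thesis using that assms(2) unfolding proper_L_coloring_def proper_coloring_def by auto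
  qed
  then show ?thesis
    using assms(2-4) unfolding proper_L_coloring_def partial_L_coloring_def proper_coloring_def
    by auto
qed

lemma proper_L_coloring_uncolor:
  "proper_L_coloring V E L g \<Longrightarrow> proper_L_coloring V E L (g(z := None))"
  unfolding proper_L_coloring_def partial_L_coloring_def proper_coloring_def by auto

lemma extend_or_move_neighbor_color:
  assumes "fin_graph V E" "degree_list_assignment V E L" "proper_L_coloring V E L g" "y \<in> V"
  shows "(\<exists>c. proper_L_coloring V E L (g(y \<mapsto> c)))
    \<or> (\<forall>z. E y z \<longrightarrow> (\<exists>\<alpha>. g z = Some \<alpha> \<and> proper_L_coloring V E L ((g(z := None))(y \<mapsto> \<alpha>))))"
proof (cases "L y \<subseteq> {c. \<exists>w. E y w \<and> g w = Some c}")
  case True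
  have "\<exists>\<alpha>. g z = Some \<alpha> \<and> proper_L_coloring V E L ((g(z := None))(y \<mapsto> \<alpha>))" if "E y z" for z
  proof -
    obtain \<alpha> where \<alpha>: "g z = Some \<alpha>" "\<alpha> \<in> L y" "\<forall>w. E y w \<and> g w = Some \<alpha> \<longrightarrow> w = z"
      using saturated_neighborhood_colors_distinct[OF assms(1,2,4) True \<open>E y z\<close>] by blast
    have "proper_L_coloring V E L ((g(z := None))(y \<mapsto> \<alpha>))"
      by (rule proper_L_coloring_map_upd[OF assms(1) proper_L_coloring_uncolor[OF assms(3)]
            assms(4) \<alpha>(2)]) (use \<alpha>(3) in auto)
    then show ?thesis using \<alpha>(1) by blast
  qed
  then show ?thesis by blast
next
  case False
  then obtain c where "c \<in> L y" "\<And>w. E y w \<Longrightarrow> g w \<noteq> Some c" by blast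
  then show ?thesis using proper_L_coloring_map_upd[OF assms(1,3,4)] by blast
qed

lemma color_along_path:
  assumes "fin_graph V E" "degree_list_assignment V E L" "E\<^sup>*\<^sup>* y u"
    and "proper_L_coloring V E L g" "y \<notin> dom g" "y \<noteq> u"
  shows "\<exists>f. proper_L_coloring V E L f \<and> dom g - {u} \<subseteq> dom f \<and> y \<in> dom f
    \<and> color_classes_le g f"
  using assms(3-6)
proof (induction arbitrary: g rule: converse_rtranclp_induct)
  case base
  then show ?case by blast
next
  case (step y z)
  have yV: "y \<in> V" and zy: "z \<noteq> y" using assms(1) step.hyps(1) unfolding fin_graph_def by auto
  have fin: "finite (dom g)"
    using assms(1) step.prems(1) finite_dom_if_partial_L_coloring
    unfolding fin_graph_def proper_L_coloring_def by blast
  from extend_or_move_neighbor_color[OF assms(1,2) step.prems(1) yV] show ?case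
  proof
    assume "\<exists>c. proper_L_coloring V E L (g(y \<mapsto> c))"
    then obtain c where "proper_L_coloring V E L (g(y \<mapsto> c))" ..
    moreover have "dom g - {u} \<subseteq> dom (g(y \<mapsto> c))" "y \<in> dom (g(y \<mapsto> c))" by auto
    ultimately show ?thesis using color_classes_le_map_upd[OF fin step.prems(2)] by blast
  next
    assume "\<forall>z. E y z \<longrightarrow> (\<exists>\<alpha>. g z = Some \<alpha> \<and> proper_L_coloring V E L ((g(z := None))(y \<mapsto> \<alpha>)))"
    then obtain \<alpha> where \<alpha>: "g z = Some \<alpha>" and
      moved: "proper_L_coloring V E L ((g(z := None))(y \<mapsto> \<alpha>))" (is "proper_L_coloring V E L ?g")
      using step.hyps(1) by blast
    have dom_moved: "dom ?g = insert y (dom g - {z})" by auto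
    have classes: "color_classes_le ?g h \<longleftrightarrow> color_classes_le g h" for h
      by (rule color_classes_le_move[OF fin step.prems(2) \<alpha>])
    show ?thesis
    proof (cases "z = u")
      case True
      have "dom g - {u} \<subseteq> dom ?g" "y \<in> dom ?g" using dom_moved True by auto
      moreover have "color_classes_le g ?g" using classes color_classes_le_refl by blast
      ultimately show ?thesis using moved by blast
    next
      case False
      have "z \<notin> dom ?g" using dom_moved zy by simp
      then obtain f where f: "proper_L_coloring V E L f" "dom ?g - {u} \<subseteq> dom f" "z \<in> dom f"
        "color_classes_le ?g f"
        using step.IH[OF moved _ False] by blast
      have "dom g - {u} \<subseteq> dom f" "y \<in> dom f"
        using f(2,3) dom_moved step.prems(3) by auto
      then show ?thesis using f(1,4) classes by blast
    qed
  qed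
qed

lemma color_all_but_one:
  assumes "fin_graph V E" "graph_connected V E" "degree_list_assignment V E L"
    and "proper_L_coloring V E L g" "u \<in> V"
  shows "\<exists>f. proper_L_coloring V E L f \<and> V - {u} \<subseteq> dom f \<and> color_classes_le g f"
  using assms(4)
proof (induction "card (V - {u} - dom g)" arbitrary: g rule: less_induct)
  case less
  show ?case
  proof (cases "V - {u} \<subseteq> dom g")
    case True
    then show ?thesis using less.prems color_classes_le_refl by blast
  next
    case False
    then obtain y where y: "y \<in> V" "y \<noteq> u" "y \<notin> dom g" by blast
    have "E\<^sup>*\<^sup>* y u" using assms(2,5) y(1) unfolding graph_connected_def by blast
    then obtain f1 where f1: "proper_L_coloring V E L f1" "dom g - {u} \<subseteq> dom f1" "y \<in> dom f1"
      "color_classes_le g f1"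
      using color_along_path[OF assms(1,3) _ less.prems y(3,2)] by blast
    have "V - {u} - dom f1 \<subset> V - {u} - dom g" using f1(2,3) y by blast
    then have "card (V - {u} - dom f1) < card (V - {u} - dom g)"
      using assms(1) unfolding fin_graph_def by (meson finite_Diff psubset_card_mono)
    then obtain f where "proper_L_coloring V E L f" "V - {u} \<subseteq> dom f" "color_classes_le f1 f"
      using less.hyps f1(1) by blast
    then show ?thesis using f1(4) color_classes_le_trans by blast
  qed
qed

theorem lemma4p1:
  fixes V :: "'v set" and E :: "'v \<Rightarrow> 'v \<Rightarrow> bool"
    and L :: "'v \<Rightarrow> 'c set" and g :: "'v \<rightharpoonup> 'c" and u :: 'v
  assumes "fin_graph V E" and "graph_connected V E"
    and "degree_list_assignment V E L"
    and "partial_L_coloring V L g" and "proper_coloring E g"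
    and "u \<in> V"
  shows "\<exists>f. partial_L_coloring V L f \<and> proper_coloring E f \<and> V - {u} \<subseteq> dom f
           \<and> (\<forall>\<alpha>. card {x. f x = Some \<alpha>} \<ge> card {x. g x = Some \<alpha>})"
  using color_all_but_one[OF assms(1-3) _ assms(6)] assms(4,5)
  unfolding proper_L_coloring_def color_classes_le_def by blast

end
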